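(* Let $n\ge 2$ and let $r_1,\ldots,r_n>0$ be such that there exists a homothetic square packing with radii $r_1,\ldots,r_n$ and $k$ contacts. Then for every $r_{n+1}>0$ there exists a homothetic square packing with radii $r_1,\ldots,r_{n+1}$ and at least $k+2$ contacts.
   Context: Let $S=\{(x,y): -1\le x,y\le 1\}$. A homothetic square packing with radii $r_1,\ldots,r_m$ is a set $\{S_1,\ldots,S_m\}$ with $S_i=r_iS+p_i$ for some $p_i\in\mathbb{R}^2$, such that distinct squares have disjoint interiors. A contact is an unordered pair $\{i,j\}$, $i\ne j$, with $S_i\cap S_j\ne\emptyset$. *)

theory Defs
  imports "HOL-Analysis.Analysis"
begin

definition hsquare :: "real \<Rightarrow> real \<times> real \<Rightarrow> (real \<times> real) set" where
  "hsquare r p = {q. \<bar>fst q - fst p\<bar> \<le> r \<and> \<bar>snd q - snd p\<bar> \<le> r}"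

definition is_packing :: "nat \<Rightarrow> (nat \<Rightarrow> real) \<Rightarrow> (nat \<Rightarrow> real \<times> real) \<Rightarrow> bool" where
  "is_packing m r p \<longleftrightarrow>
     (\<forall>i j. i < m \<and> j < m \<and> i \<noteq> j \<longrightarrow>
        interior (hsquare (r i) (p i)) \<inter> interior (hsquare (r j) (p j)) = {})"

definition contacts :: "nat \<Rightarrow> (nat \<Rightarrow> real) \<Rightarrow> (nat \<Rightarrow> real \<times> real) \<Rightarrow> nat set set" where
  "contacts m r p = {{i, j} | i j. i < m \<and> j < m \<and> i \<noteq> j \<and>
                       hsquare (r i) (p i) \<inter> hsquare (r j) (p j) \<noteq> {}}"

end

theory Submission
  imports Defs
begin

(* The squares r S + p are the closed balls of the Chebyshev (sup-norm) metric, so two squares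
   have disjoint interiors iff their centres are at distance at least r_i + r_j, and they meet
   iff that distance is at most r_i + r_j.

   Let S_i be a square whose top edge is highest. If S_i touches no other square, it can be put
   on top of the highest remaining square without losing any contact; so we may assume that S_i
   touches some S_j, which lies to the right of, to the left of, or below S_i. Lower the new
   square down the strip of width 2 rho along the right edge of S_i until it lands on the highest
   square meeting that strip: if it lands before passing the bottom of S_i, it touches both. The
   left side is the mirror image. Otherwise S_j lies below S_i, and we push the new square
   leftwards in the band of height 2 rho under S_i until it meets the rightmost square of that
   band; as the right strip is empty down there, this square ends before the right edge of S_i,
   so the new square touches both. All old contacts survive and two new ones appear. *)

definition chebyshev_dist :: "real \<times> real \<Rightarrow> real \<times> real \<Rightarrow> real" where
  "chebyshev_dist a b = max \<bar>fst a - fst b\<bar> \<bar>snd a - snd b\<bar>"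

lemma chebyshev_dist_commute: "chebyshev_dist a b = chebyshev_dist b a"
  by (simp add: chebyshev_dist_def abs_minus_commute)

lemma chebyshev_dist_le_iff:
  "chebyshev_dist a b \<le> t \<longleftrightarrow> \<bar>fst a - fst b\<bar> \<le> t \<and> \<bar>snd a - snd b\<bar> \<le> t"
  by (simp add: chebyshev_dist_def)

lemma le_chebyshev_dist_iff:
  "t \<le> chebyshev_dist a b \<longleftrightarrow> t \<le> \<bar>fst a - fst b\<bar> \<or> t \<le> \<bar>snd a - snd b\<bar>"
  by (simp add: chebyshev_dist_def le_max_iff_disj)

lemma finite_argmax:
  fixes f :: "'a \<Rightarrow> 'b::linorder"
  assumes "finite S" "S \<noteq> {}"
  obtains k where "k \<in> S" "\<forall>j\<in>S. f j \<le> f k"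
proof -
  obtain k where "k \<in> S" "Max (f ` S) = f k"
    using obtains_MAX[OF assms] .
  with assms that show ?thesis
    by (metis Max_ge finite_imageI imageI)
qed

lemma interior_hsquare:
  "interior (hsquare r c) = {fst c - r <..< fst c + r} \<times> {snd c - r <..< snd c + r}"
proof -
  have "hsquare r c = {fst c - r .. fst c + r} \<times> {snd c - r .. snd c + r}"
    by (auto simp: hsquare_def abs_le_iff)
  then show ?thesis
    by (simp add: interior_Times)
qed

lemma hsquare_interiors_disjoint_iff:
  assumes "r1 > 0" "r2 > 0"
  shows "interior (hsquare r1 c1) \<inter> interior (hsquare r2 c2) = {} \<longleftrightarrow>
    r1 + r2 \<le> chebyshev_dist c1 c2"
proof
  assume disjoint: "interior (hsquare r1 c1) \<inter> interior (hsquare r2 c2) = {}"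
  show "r1 + r2 \<le> chebyshev_dist c1 c2"
  proof (rule ccontr)
    assume "\<not> ?thesis"
    then have close: "\<bar>fst c1 - fst c2\<bar> < r1 + r2" "\<bar>snd c1 - snd c2\<bar> < r1 + r2"
      by (auto simp: chebyshev_dist_def)
    define x where "x = (max (fst c1 - r1) (fst c2 - r2) + min (fst c1 + r1) (fst c2 + r2)) / 2"
    define y where "y = (max (snd c1 - r1) (snd c2 - r2) + min (snd c1 + r1) (snd c2 + r2)) / 2"
    have "(x, y) \<in> interior (hsquare r1 c1) \<inter> interior (hsquare r2 c2)"
      using close assms by (auto simp: interior_hsquare x_def y_def abs_less_iff max_def min_def)
    with disjoint show False
      by blast
  qed
qed (auto simp: interior_hsquare chebyshev_dist_def abs_le_iff)

lemma hsquares_intersect_iff: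
  assumes "r1 \<ge> 0" "r2 \<ge> 0"
  shows "hsquare r1 c1 \<inter> hsquare r2 c2 \<noteq> {} \<longleftrightarrow> chebyshev_dist c1 c2 \<le> r1 + r2"
proof
  assume "chebyshev_dist c1 c2 \<le> r1 + r2"
  then have "(max (fst c1 - r1) (fst c2 - r2), max (snd c1 - r1) (snd c2 - r2))
      \<in> hsquare r1 c1 \<inter> hsquare r2 c2"
    using assms by (auto simp: hsquare_def chebyshev_dist_le_iff abs_le_iff max_def)
  then show "hsquare r1 c1 \<inter> hsquare r2 c2 \<noteq> {}"
    by blast
qed (auto simp: hsquare_def chebyshev_dist_le_iff abs_le_iff)

lemma is_packing_iff:
  assumes "\<forall>i<m. r i > 0"
  shows "is_packing m r p \<longleftrightarrow>
    (\<forall>i<m. \<forall>j<m. i \<noteq> j \<longrightarrow> r i + r j \<le> chebyshev_dist (p i) (p j))"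
  using assms by (auto simp: is_packing_def hsquare_interiors_disjoint_iff)

lemma contacts_eq:
  assumes "\<forall>i<m. r i \<ge> 0"
  shows "contacts m r p =
    {{i, j} | i j. i < m \<and> j < m \<and> i \<noteq> j \<and> chebyshev_dist (p i) (p j) \<le> r i + r j}"
  unfolding contacts_def using assms by (simp add: hsquares_intersect_iff cong: conj_cong)

lemma finite_contacts: "finite (contacts m r p)"
  by (rule finite_subset[of _ "Pow {..<m}"]) (auto simp: contacts_def)

definition docking_spot ::
    "nat \<Rightarrow> (nat \<Rightarrow> real) \<Rightarrow> (nat \<Rightarrow> real \<times> real) \<Rightarrow> real \<Rightarrow> real \<times> real \<Rightarrow> bool" where
  "docking_spot n r p \<rho> c \<longleftrightarrow>
     (\<forall>j<n. \<rho> + r j \<le> chebyshev_dist c (p j)) \<and>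
     (\<exists>i j. i < n \<and> j < n \<and> i \<noteq> j \<and>
        chebyshev_dist c (p i) \<le> \<rho> + r i \<and> chebyshev_dist c (p j) \<le> \<rho> + r j)"

lemma is_packing_extend:
  assumes "is_packing n r p" "\<forall>i<n. r i > 0" "\<rho> > 0" "docking_spot n r p \<rho> c"
  shows "is_packing (Suc n) (r(n := \<rho>)) (p(n := c))"
proof -
  have pos: "\<forall>i<Suc n. (r(n := \<rho>)) i > 0"
    using assms(2,3) by simp
  have far: "\<forall>j<n. \<rho> + r j \<le> chebyshev_dist c (p j)"
    using assms(4) by (simp add: docking_spot_def)
  show ?thesis
    using assms(1,2) far unfolding is_packing_iff[OF pos] is_packing_iff[OF assms(2)]
    by (auto simp: less_Suc_eq chebyshev_dist_commute add.commute)
qed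

lemma card_contacts_extend:
  assumes "\<forall>i<n. r i \<ge> 0" "\<rho> \<ge> 0" "docking_spot n r p \<rho> c"
  shows "card (contacts n r p) + 2 \<le> card (contacts (Suc n) (r(n := \<rho>)) (p(n := c)))"
proof -
  let ?C = "contacts (Suc n) (r(n := \<rho>)) (p(n := c))"
  obtain i j where ij: "i < n" "j < n" "i \<noteq> j"
    and touch: "chebyshev_dist c (p i) \<le> \<rho> + r i" "chebyshev_dist c (p j) \<le> \<rho> + r j"
    using assms(3) by (auto simp: docking_spot_def)
  have nonneg: "\<forall>l<Suc n. (r(n := \<rho>)) l \<ge> 0"
    using assms(1,2) by simp
  have new: "{l, n} \<in> ?C" if "l < n" "chebyshev_dist c (p l) \<le> \<rho> + r l" for l
    unfolding contacts_eq[OF nonneg]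
    by (intro CollectI exI[of _ l] exI[of _ n])
      (use that in \<open>auto simp: chebyshev_dist_commute add.commute\<close>)
  have "{i, n} \<in> ?C" "{j, n} \<in> ?C"
    using new ij touch by auto
  moreover have "contacts n r p \<subseteq> ?C"
    unfolding contacts_def by force
  ultimately have sub: "insert {i, n} (insert {j, n} (contacts n r p)) \<subseteq> ?C"
    by blast
  have "{i, n} \<notin> contacts n r p" "{j, n} \<notin> contacts n r p" "{i, n} \<noteq> {j, n}"
    using ij by (auto simp: contacts_def doubleton_eq_iff)
  then have "card (insert {i, n} (insert {j, n} (contacts n r p))) = card (contacts n r p) + 2"
    by (simp add: finite_contacts)
  with sub show ?thesis
    by (metis card_mono finite_contacts)
qed

definition mirror :: "real \<times> real \<Rightarrow> real \<times> real" where
  "mirror q = (- fst q, snd q)"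

lemma chebyshev_dist_mirror: "chebyshev_dist (mirror a) (mirror b) = chebyshev_dist a b"
  by (simp add: chebyshev_dist_def mirror_def abs_minus_commute)

lemma docking_spot_mirror:
  assumes "docking_spot n r (mirror \<circ> p) \<rho> c"
  shows "docking_spot n r p \<rho> (mirror c)"
proof -
  have "chebyshev_dist (mirror c) (p j) = chebyshev_dist c ((mirror \<circ> p) j)" for j
    by (metis chebyshev_dist_mirror comp_apply mirror_def fst_conv snd_conv minus_minus prod.collapse)
  with assms show ?thesis
    by (simp add: docking_spot_def)
qed

definition topmost :: "nat \<Rightarrow> (nat \<Rightarrow> real) \<Rightarrow> (nat \<Rightarrow> real \<times> real) \<Rightarrow> nat \<Rightarrow> bool" where
  "topmost n r p i \<longleftrightarrow> i < n \<and> (\<forall>j<n. snd (p j) + r j \<le> snd (p i) + r i)"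

definition right_strip ::
    "nat \<Rightarrow> (nat \<Rightarrow> real) \<Rightarrow> (nat \<Rightarrow> real \<times> real) \<Rightarrow> nat \<Rightarrow> real \<Rightarrow> nat set" where
  "right_strip n r p i \<rho> = {j. j < n \<and>
     fst (p j) - r j < fst (p i) + r i + 2 * \<rho> \<and> fst (p i) + r i < fst (p j) + r j}"

definition below_band ::
    "nat \<Rightarrow> (nat \<Rightarrow> real) \<Rightarrow> (nat \<Rightarrow> real \<times> real) \<Rightarrow> nat \<Rightarrow> real \<Rightarrow> nat set" where
  "below_band n r p i \<rho> = {j. j < n \<and>
     snd (p j) - r j < snd (p i) - r i \<and> snd (p i) - r i - 2 * \<rho> < snd (p j) + r j \<and>
     fst (p j) - r j < fst (p i) + r i + 2 * \<rho> \<and> fst (p i) - r i - 2 * \<rho> < fst (p j) + r j}"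

lemma docking_spot_right_of_topmost:
  assumes "topmost n r p i" "j \<in> right_strip n r p i \<rho>"
    and "snd (p i) - r i - 2 * \<rho> \<le> snd (p j) + r j"
  shows "\<exists>c. docking_spot n r p \<rho> c"
proof -
  let ?S = "right_strip n r p i \<rho>"
  have "finite ?S"
    by (simp add: right_strip_def)
  then obtain k where k: "k \<in> ?S" and highest: "\<forall>l\<in>?S. snd (p l) + r l \<le> snd (p k) + r k"
    using finite_argmax[of ?S "\<lambda>l. snd (p l) + r l"] assms(2) by blast
  define c where "c = (fst (p i) + r i + \<rho>, snd (p k) + r k + \<rho>)"
  have "\<rho> + r l \<le> chebyshev_dist c (p l)" if "l < n" for l
  proof (cases "l \<in> ?S")
    case True
    then show ?thesis
      using highest by (auto simp: c_def le_chebyshev_dist_iff)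
  next
    case False
    then show ?thesis
      using that by (auto simp: right_strip_def c_def le_chebyshev_dist_iff)
  qed
  moreover have "k < n" "k \<noteq> i" "chebyshev_dist c (p k) \<le> \<rho> + r k"
    using k by (auto simp: c_def right_strip_def chebyshev_dist_le_iff)
  moreover have "chebyshev_dist c (p i) \<le> \<rho> + r i"
  proof -
    have "j < n" "k < n"
      using assms(2) k by (auto simp: right_strip_def)
    then show ?thesis
      using assms highest k by (auto simp: c_def topmost_def chebyshev_dist_le_iff abs_le_iff)
  qed
  ultimately show ?thesis
    using assms(1) unfolding docking_spot_def topmost_def by blast
qed

lemma docking_spot_below:
  assumes "i < n" "j \<in> below_band n r p i \<rho>"
    and "\<forall>l\<in>right_strip n r p i \<rho>. snd (p l) + r l < snd (p i) - r i - 2 * \<rho>"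
  shows "\<exists>c. docking_spot n r p \<rho> c"
proof -
  let ?B = "below_band n r p i \<rho>"
  have "finite ?B"
    by (simp add: below_band_def)
  then obtain k where k: "k \<in> ?B" and rightmost: "\<forall>l\<in>?B. fst (p l) + r l \<le> fst (p k) + r k"
    using finite_argmax[of ?B "\<lambda>l. fst (p l) + r l"] assms(2) by blast
  have k_left: "fst (p k) + r k \<le> fst (p i) + r i"
  proof (rule ccontr)
    assume "\<not> ?thesis"
    then have "k \<in> right_strip n r p i \<rho>"
      using k by (auto simp: below_band_def right_strip_def)
    with assms(3) k show False
      by (fastforce simp: below_band_def)
  qed
  define c where "c = (fst (p k) + r k + \<rho>, snd (p i) - r i - \<rho>)"
  have "\<rho> + r l \<le> chebyshev_dist c (p l)" if "l < n" for l
  proof (cases "l \<in> ?B")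
    case True
    then show ?thesis
      using rightmost by (auto simp: c_def le_chebyshev_dist_iff)
  next
    case False
    then show ?thesis
      using that k k_left by (auto simp: below_band_def c_def le_chebyshev_dist_iff)
  qed
  moreover have "k < n" "k \<noteq> i" "chebyshev_dist c (p k) \<le> \<rho> + r k"
    using k by (auto simp: c_def below_band_def chebyshev_dist_le_iff)
  moreover have "chebyshev_dist c (p i) \<le> \<rho> + r i"
    using k k_left by (auto simp: c_def below_band_def chebyshev_dist_le_iff abs_le_iff)
  ultimately show ?thesis
    using assms(1) unfolding docking_spot_def by blast
qed

lemma docking_spot_at_topmost:
  assumes "\<forall>l<n. r l > 0" "\<rho> > 0" "topmost n r p i" "j < n"
    and "chebyshev_dist (p i) (p j) = r i + r j"
  shows "\<exists>c. docking_spot n r p \<rho> c"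
proof -
  have dock_at_right_neighbour: "\<exists>c. docking_spot n r q \<rho> c"
    if "topmost n r q i" "fst (q j) - fst (q i) = r i + r j" "\<bar>snd (q i) - snd (q j)\<bar> \<le> r i + r j"
    for q
  proof -
    have "j \<in> right_strip n r q i \<rho>"
      using that assms(1,2,4) by (auto simp: right_strip_def)
    moreover have "snd (q i) - r i - 2 * \<rho> \<le> snd (q j) + r j"
      using that assms(2) by (auto simp: abs_le_iff)
    ultimately show ?thesis
      using docking_spot_right_of_topmost that(1) by blast
  qed
  have "snd (p j) + r j \<le> snd (p i) + r i" "r j > 0"
    using assms(1,3,4) by (auto simp: topmost_def)
  with assms(5) consider
      (right) "fst (p j) - fst (p i) = r i + r j" "\<bar>snd (p i) - snd (p j)\<bar> \<le> r i + r j"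
    | (left) "fst (p i) - fst (p j) = r i + r j" "\<bar>snd (p i) - snd (p j)\<bar> \<le> r i + r j"
    | (below) "snd (p i) - snd (p j) = r i + r j" "\<bar>fst (p i) - fst (p j)\<bar> \<le> r i + r j"
    by (auto simp: chebyshev_dist_def max_def abs_if split: if_splits)
  then show ?thesis
  proof cases
    case right
    then show ?thesis
      using dock_at_right_neighbour assms(3) by blast
  next
    case left
    let ?q = "mirror \<circ> p"
    have q: "topmost n r ?q i" "fst (?q j) - fst (?q i) = r i + r j"
      "\<bar>snd (?q i) - snd (?q j)\<bar> \<le> r i + r j"
      using assms(3) left by (simp_all add: topmost_def mirror_def)
    obtain c where "docking_spot n r ?q \<rho> c"
      using dock_at_right_neighbour[OF q] by blast
    then show ?thesis
      using docking_spot_mirror by blast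
  next
    case below
    show ?thesis
    proof (cases "\<exists>l\<in>right_strip n r p i \<rho>. snd (p i) - r i - 2 * \<rho> \<le> snd (p l) + r l")
      case True
      then show ?thesis
        using docking_spot_right_of_topmost assms(3) by blast
    next
      case False
      have "j \<in> below_band n r p i \<rho>"
        using below assms(1,2,4) by (auto simp: below_band_def abs_le_iff)
      then show ?thesis
        using docking_spot_below False assms(3) by (auto simp: topmost_def not_le)
    qed
  qed
qed

lemma lift_isolated_square:
  assumes "n \<ge> 2" "\<forall>l<n. r l > 0" "is_packing n r p" "i < n"
    and isolated: "\<forall>j<n. j \<noteq> i \<longrightarrow> r i + r j < chebyshev_dist (p i) (p j)"
  shows "\<exists>p'. is_packing n r p' \<and> contacts n r p \<subseteq> contacts n r p' \<and> topmost n r p' i \<and>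
    (\<exists>j<n. j \<noteq> i \<and> chebyshev_dist (p' i) (p' j) = r i + r j)"
proof -
  let ?O = "{j. j < n \<and> j \<noteq> i}"
  have "(if i = 0 then 1 else 0) \<in> ?O"
    using assms(1,4) by auto
  then obtain m where m: "m \<in> ?O" and highest: "\<forall>j\<in>?O. snd (p j) + r j \<le> snd (p m) + r m"
    using finite_argmax[of ?O "\<lambda>j. snd (p j) + r j"] by auto
  have pos_im: "r i > 0" "r m > 0"
    using assms(2,4) m by auto
  define p' where "p' = p(i := (fst (p m), snd (p m) + r m + r i))"
  have above: "r i + r j \<le> chebyshev_dist (p' i) (p' j)" if "j \<in> ?O" for j
    using highest that by (auto simp: p'_def le_chebyshev_dist_iff)
  have "is_packing n r p'"
    unfolding is_packing_iff[OF assms(2)]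
  proof (intro allI impI)
    fix a b
    assume ab: "a < n" "b < n" "a \<noteq> b"
    show "r a + r b \<le> chebyshev_dist (p' a) (p' b)"
    proof (cases "a = i \<or> b = i")
      case True
      then show ?thesis
        using ab above[of a] above[of b] by (auto simp: chebyshev_dist_commute add.commute)
    next
      case False
      then show ?thesis
        using ab assms(3) by (simp add: is_packing_iff[OF assms(2)] p'_def)
    qed
  qed
  moreover have "contacts n r p \<subseteq> contacts n r p'"
  proof
    fix e
    assume "e \<in> contacts n r p"
    moreover have nonneg: "\<forall>l<n. r l \<ge> 0"
      using assms(2) by auto
    ultimately obtain a b where e: "e = {a, b}" "a < n" "b < n" "a \<noteq> b"
      and close: "chebyshev_dist (p a) (p b) \<le> r a + r b"
      by (auto simp: contacts_eq)
    have "a \<noteq> i" "b \<noteq> i"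
      using isolated close e by (auto simp: chebyshev_dist_commute add.commute not_le[symmetric])
    then have "chebyshev_dist (p' a) (p' b) \<le> r a + r b"
      using close by (simp add: p'_def)
    with e nonneg show "e \<in> contacts n r p'"
      unfolding contacts_eq[OF nonneg] by blast
  qed
  moreover have "topmost n r p' i"
    using assms(4) highest pos_im by (auto simp: topmost_def p'_def)
  moreover have "chebyshev_dist (p' i) (p' m) = r i + r m"
    using m pos_im by (simp add: p'_def chebyshev_dist_def)
  ultimately show ?thesis
    using m by blast
qed

lemma packing_with_touching_topmost:
  assumes "n \<ge> 2" "\<forall>l<n. r l > 0" "is_packing n r p"
  shows "\<exists>p' i j. is_packing n r p' \<and> contacts n r p \<subseteq> contacts n r p' \<and> topmost n r p' i \<and>
    j < n \<and> j \<noteq> i \<and> chebyshev_dist (p' i) (p' j) = r i + r j"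
proof -
  have "0 \<in> {..<n}"
    using assms(1) by simp
  then obtain i where "i \<in> {..<n}" "\<forall>j\<in>{..<n}. snd (p j) + r j \<le> snd (p i) + r i"
    using finite_argmax[OF finite_lessThan, of n "\<lambda>l. snd (p l) + r l"] by blast
  then have i: "topmost n r p i"
    by (simp add: topmost_def)
  show ?thesis
  proof (cases "\<exists>j<n. j \<noteq> i \<and> chebyshev_dist (p i) (p j) \<le> r i + r j")
    case True
    then obtain j where j: "j < n" "j \<noteq> i" "chebyshev_dist (p i) (p j) \<le> r i + r j"
      by blast
    moreover have "r i + r j \<le> chebyshev_dist (p i) (p j)"
      using j i assms(2,3) by (auto simp: is_packing_iff topmost_def)
    ultimately have "chebyshev_dist (p i) (p j) = r i + r j"
      by simp
    with i j assms(3) show ?thesis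
      by blast
  next
    case False
    then have "\<forall>j<n. j \<noteq> i \<longrightarrow> r i + r j < chebyshev_dist (p i) (p j)"
      by auto
    moreover have "i < n"
      using i by (simp add: topmost_def)
    ultimately show ?thesis
      using lift_isolated_square[OF assms] by blast
  qed
qed

theorem lemma20:
  fixes n k :: nat and r :: "nat \<Rightarrow> real" and p :: "nat \<Rightarrow> real \<times> real"
  assumes "n \<ge> 2"
    and "\<forall>i < n. r i > 0"
    and "is_packing n r p"
    and "card (contacts n r p) = k"
  shows "\<forall>\<rho> > 0. \<exists>q :: nat \<Rightarrow> real \<times> real.
           is_packing (Suc n) (r(n := \<rho>)) q \<and> card (contacts (Suc n) (r(n := \<rho>)) q) \<ge> k + 2"
proof (intro allI impI)
  fix \<rho> :: real
  assume "\<rho> > 0"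
  obtain p' i j where p': "is_packing n r p'" "contacts n r p \<subseteq> contacts n r p'"
    and "topmost n r p' i" "j < n" "j \<noteq> i" "chebyshev_dist (p' i) (p' j) = r i + r j"
    using packing_with_touching_topmost[OF assms(1-3)] by blast
  then obtain c where c: "docking_spot n r p' \<rho> c"
    using docking_spot_at_topmost[OF assms(2) \<open>\<rho> > 0\<close>] by blast
  have "k + 2 \<le> card (contacts n r p') + 2"
    using card_mono[OF finite_contacts p'(2)] assms(4) by simp
  also have "\<dots> \<le> card (contacts (Suc n) (r(n := \<rho>)) (p'(n := c)))"
    using card_contacts_extend c assms(2) \<open>\<rho> > 0\<close> by (simp add: less_imp_le)
  finally show "\<exists>q. is_packing (Suc n) (r(n := \<rho>)) q \<and> card (contacts (Suc n) (r(n := \<rho>)) q) \<ge> k + 2"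
    using is_packing_extend[OF p'(1) assms(2) \<open>\<rho> > 0\<close> c] by blast
qed

end
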